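(* Let $(T_1,\dots,T_k)$ be a tuple of contractions on a Hilbert space $\mathcal{H}$ and $q_{ij}\in\mathbb{T}$ ($1\le i<j\le k$) such that $T_iT_j=q_{ij}T_jT_i$ and $T_iT_j^*=\overline{q_{ij}}\,T_j^*T_i$ for $1\le i<j\le k$. Then for every subset $u\subseteq\{1,\dots,k\}$, \[ S(u)=\sum_{v\subseteq u}(-1)^{|v|}(T^{e(v)})^*T^{e(v)}\ge 0, \] where for $v=\{n_1<\dots<n_r\}$, $T^{e(v)}=T_{n_1}\cdots T_{n_r}$ (and $T^{e(\emptyset)}=I$). *)

theory Defs
  imports "HOL-Analysis.Analysis"
begin

class complex_vector = real_vector +
  fixes scaleC :: "complex \<Rightarrow> 'a \<Rightarrow> 'a" (infixr \<open>*\<^sub>C\<close> 75)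
  assumes scaleC_add_right: "a *\<^sub>C (x + y) = a *\<^sub>C x + a *\<^sub>C y"
    and scaleC_add_left: "(a + b) *\<^sub>C x = a *\<^sub>C x + b *\<^sub>C x"
    and scaleC_scaleC: "a *\<^sub>C (b *\<^sub>C x) = (a * b) *\<^sub>C x"
    and scaleC_one: "1 *\<^sub>C x = x"
    and scaleR_scaleC: "r *\<^sub>R x = complex_of_real r *\<^sub>C x"

class complex_inner = complex_vector + real_normed_vector +
  fixes cinner :: "'a \<Rightarrow> 'a \<Rightarrow> complex"
  assumes cinner_commute: "cinner x y = cnj (cinner y x)"
    and cinner_add_left: "cinner (x + y) z = cinner x z + cinner y z"
    and cinner_scaleC_left: "cinner (a *\<^sub>C x) y = cnj a * cinner x y"
    and cinner_self_real: "Im (cinner x x) = 0"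
    and cinner_self_nonneg: "0 \<le> Re (cinner x x)"
    and cinner_self_eq_zero: "cinner x x = 0 \<longleftrightarrow> x = 0"
    and norm_eq_sqrt_cinner: "norm x = sqrt (Re (cinner x x))"

class chilbert_space = complex_inner + complete_space

definition clinear_op :: "('a::complex_vector \<Rightarrow> 'a) \<Rightarrow> bool" where
  "clinear_op T \<longleftrightarrow> (\<forall>x y. T (x + y) = T x + T y) \<and> (\<forall>c x. T (c *\<^sub>C x) = c *\<^sub>C T x)"

definition contraction :: "('a::complex_inner \<Rightarrow> 'a) \<Rightarrow> bool" where
  "contraction T \<longleftrightarrow> clinear_op T \<and> (\<forall>x. norm (T x) \<le> norm x)"

text \<open>Hilbert space adjoint (unique for bounded operators on a Hilbert space).\<close>
definition adj :: "('a::complex_inner \<Rightarrow> 'a) \<Rightarrow> ('a \<Rightarrow> 'a)" where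
  "adj T = (SOME S. \<forall>x y. cinner (T x) y = cinner x (S y))"

definition positive_op :: "('a::complex_inner \<Rightarrow> 'a) \<Rightarrow> bool" where
  "positive_op A \<longleftrightarrow> (\<forall>x. Im (cinner x (A x)) = 0 \<and> 0 \<le> Re (cinner x (A x)))"

definition Tpow :: "(nat \<Rightarrow> 'a \<Rightarrow> 'a) \<Rightarrow> nat set \<Rightarrow> ('a \<Rightarrow> 'a)" where
  "Tpow T v = foldr (\<lambda>i f. T i \<circ> f) (sorted_list_of_set v) id"

definition Sop :: "(nat \<Rightarrow> 'a::complex_inner \<Rightarrow> 'a) \<Rightarrow> nat set \<Rightarrow> ('a \<Rightarrow> 'a)" where
  "Sop T u = (\<lambda>x. \<Sum>v\<in>Pow u. ((-1::real) ^ card v) *\<^sub>R adj (Tpow T v) (Tpow T v x))"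

end

theory Submission
  imports Defs
begin

(* Write B(u; y, z) for the real part of <S(u) y, z>. Removing the least index n of u gives
   S(u) = S(u') - T_n^* S(u') T_n with u' = u - {n}. The commutation relations make
   P = T_n^* T_n commute with every T_j, j in u', so P is symmetric for the form B(u'),
   which is nonnegative by induction. As P is a contraction, iterating the Cauchy-Schwarz
   inequality of B(u') along the orbit of P gives B(u'; P x, x) <= B(u'; x, x), that is
   S(u) >= 0. The adjoints involved exist by the Riesz representation theorem. *)

lemma quadratic_nonneg_imp_sq_le:
  fixes a b c :: real
  assumes nonneg: "\<And>t. 0 \<le> a - 2 * t * b + t\<^sup>2 * c"
  shows "b\<^sup>2 \<le> a * c"
proof -
  have a0: "0 \<le> a" using nonneg[of 0] by simp
  consider "c < 0" | "c = 0" "b \<noteq> 0" | "c = 0" "b = 0" | "0 < c" by linarith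
  then show ?thesis
  proof cases
    case 1
    define t where "t = sqrt ((a + 1) / - c)"
    have "t\<^sup>2 = (a + 1) / - c" using 1 a0 by (simp add: t_def divide_nonneg_neg)
    then have "t\<^sup>2 * c = - (a + 1)" using 1 by (simp add: field_simps)
    then show ?thesis using nonneg[of t] nonneg[of "- t"] by simp
  next
    case 2
    then show ?thesis using nonneg[of "(a + 1) / (2 * b)"] by simp
  next
    case 3
    then show ?thesis by simp
  next
    case 4
    have "0 \<le> a - 2 * (b / c) * b + (b / c)\<^sup>2 * c" by (rule nonneg)
    also have "\<dots> = (a * c - b\<^sup>2) / c" using 4 by (simp add: field_simps power2_eq_square)
    finally show ?thesis using 4 by (simp add: zero_le_divide_iff)
  qed
qed

lemma psd_form_Cauchy_Schwarz:
  fixes B :: "'a::real_vector \<Rightarrow> 'a \<Rightarrow> real"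
  assumes psd: "\<And>y. 0 \<le> B y y"
    and expand: "\<And>y z t. B (y - t *\<^sub>R z) (y - t *\<^sub>R z) = B y y - 2 * t * B y z + t\<^sup>2 * B z z"
  shows "(B y z)\<^sup>2 \<le> B y y * B z z"
  using psd[of "y - _ *\<^sub>R z"] by (intro quadratic_nonneg_imp_sq_le) (simp only: expand)

section \<open>Complex inner product spaces\<close>

lemma cinner_add_right: "cinner (x::'a::complex_inner) (y + z) = cinner x y + cinner x z"
  by (metis cinner_add_left cinner_commute complex_cnj_add)

lemma cinner_scaleC_right: "cinner (x::'a::complex_inner) (c *\<^sub>C y) = c * cinner x y"
  by (metis cinner_commute cinner_scaleC_left complex_cnj_cnj complex_cnj_mult)

lemma cinner_scaleR_left: "cinner (r *\<^sub>R (x::'a::complex_inner)) y = of_real r * cinner x y"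
  by (simp add: scaleR_scaleC cinner_scaleC_left)

lemma cinner_scaleR_right: "cinner (x::'a::complex_inner) (r *\<^sub>R y) = of_real r * cinner x y"
  by (simp add: scaleR_scaleC cinner_scaleC_right)

lemma cinner_zero_left [simp]: "cinner 0 (y::'a::complex_inner) = 0"
  using cinner_add_left[of 0 0 y] by simp

lemma cinner_zero_right [simp]: "cinner (x::'a::complex_inner) 0 = 0"
  using cinner_add_right[of x 0 0] by simp

lemma cinner_minus_left: "cinner (- (x::'a::complex_inner)) y = - cinner x y"
  using cinner_add_left[of x "- x" y] add_eq_0_iff by fastforce

lemma cinner_minus_right: "cinner (x::'a::complex_inner) (- y) = - cinner x y"
  by (metis cinner_commute cinner_minus_left complex_cnj_minus)

lemma cinner_diff_left: "cinner ((x::'a::complex_inner) - y) z = cinner x z - cinner y z"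
  using cinner_add_left[of x "- y" z] by (simp add: cinner_minus_left)

lemma cinner_diff_right: "cinner (x::'a::complex_inner) (y - z) = cinner x y - cinner x z"
  using cinner_add_right[of x y "- z"] by (simp add: cinner_minus_right)

lemma cinner_sum_right: "cinner (x::'a::complex_inner) (sum f A) = (\<Sum>a\<in>A. cinner x (f a))"
  by (induction A rule: infinite_finite_induct) (simp_all add: cinner_add_right)

lemma Re_cinner_self: "Re (cinner (x::'a::complex_inner) x) = (norm x)\<^sup>2"
  using norm_eq_sqrt_cinner[of x] cinner_self_nonneg[of x] by simp

lemma cinner_self: "cinner (x::'a::complex_inner) x = of_real ((norm x)\<^sup>2)"
  using Re_cinner_self[of x] cinner_self_real[of x] by (simp add: complex_eq_iff)

lemma Re_cinner_commute: "Re (cinner (x::'a::complex_inner) y) = Re (cinner y x)"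
  by (subst cinner_commute) simp

lemma Re_cinner_diff_scaleR:
  "Re (cinner ((y::'a::complex_inner) - t *\<^sub>R z) (y - t *\<^sub>R z))
     = Re (cinner y y) - 2 * t * Re (cinner y z) + t\<^sup>2 * Re (cinner z z)"
  using Re_cinner_commute[of y z]
  by (simp add: cinner_diff_left cinner_diff_right cinner_scaleR_left cinner_scaleR_right
      power2_eq_square algebra_simps)

lemma Re_cinner_le_norm: "Re (cinner (x::'a::complex_inner) y) \<le> norm x * norm y"
proof -
  have "(Re (cinner x y))\<^sup>2 \<le> Re (cinner x x) * Re (cinner y y)"
    using psd_form_Cauchy_Schwarz[where B = "\<lambda>x y. Re (cinner x y)", of x y]
    by (simp add: cinner_self_nonneg Re_cinner_diff_scaleR)
  then have "(Re (cinner x y))\<^sup>2 \<le> (norm x * norm y)\<^sup>2"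
    by (simp add: Re_cinner_self power_mult_distrib)
  then show ?thesis
    using abs_le_square_iff[of "Re (cinner x y)" "norm x * norm y"] by simp
qed

lemma norm_scaleC: "norm (c *\<^sub>C (x::'a::complex_inner)) = cmod c * norm x"
proof -
  have "(norm (c *\<^sub>C x))\<^sup>2 = Re ((c * cnj c) * cinner x x)"
    by (simp add: Re_cinner_self[symmetric] cinner_scaleC_left cinner_scaleC_right mult_ac)
  also have "\<dots> = (cmod c * norm x)\<^sup>2"
    by (simp only: cinner_self complex_norm_square[symmetric] of_real_mult[symmetric] Re_complex_of_real)
      (simp add: power_mult_distrib)
  finally show ?thesis by (simp add: power2_eq_iff_nonneg)
qed

text \<open>Rotating \<open>y\<close> by the phase of \<open>cinner x y\<close> reduces the claim to its real part.\<close>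
lemma norm_cinner_le: "cmod (cinner (x::'a::complex_inner) y) \<le> norm x * norm y"
proof (cases "cinner x y = 0")
  case False
  define c where "c = cnj (cinner x y) / cmod (cinner x y)"
  have "cinner x (c *\<^sub>C y) = (cinner x y * cnj (cinner x y)) / of_real (cmod (cinner x y))"
    by (simp add: c_def cinner_scaleC_right mult.commute)
  also have "\<dots> = of_real ((cmod (cinner x y))\<^sup>2) / of_real (cmod (cinner x y))"
    by (simp only: complex_norm_square)
  also have "\<dots> = of_real (cmod (cinner x y))"
    using False by (simp add: power2_eq_square del: of_real_power)
  finally have "Re (cinner x (c *\<^sub>C y)) = cmod (cinner x y)" by simp
  moreover have "cmod c = 1" using False by (simp add: c_def norm_divide)
  ultimately show ?thesis using Re_cinner_le_norm[of x "c *\<^sub>C y"] by (simp add: norm_scaleC)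
qed simp

lemma cinner_eq_imp_eq: "(\<And>z. cinner z a = cinner z b) \<Longrightarrow> (a::'a::complex_inner) = b"
  using cinner_self_eq_zero[of "a - b"] by (simp add: cinner_diff_right)

lemma parallelogram_law:
  "(norm ((a::'a::complex_inner) - b))\<^sup>2 + (norm (a + b))\<^sup>2 = 2 * (norm a)\<^sup>2 + 2 * (norm b)\<^sup>2"
  by (simp add: Re_cinner_self[symmetric] cinner_diff_left cinner_diff_right
      cinner_add_left cinner_add_right)

section \<open>The Riesz representation theorem and adjoints\<close>

lemma exists_min_norm:
  fixes A :: "'a::chilbert_space set"
  assumes "closed A" and "a \<in> A"
    and midpoint: "\<And>x y. x \<in> A \<Longrightarrow> y \<in> A \<Longrightarrow> (1/2) *\<^sub>R (x + y) \<in> A"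
  shows "\<exists>x0\<in>A. \<forall>y\<in>A. norm x0 \<le> norm y"
proof -
  define d where "d = Inf ((\<lambda>x. (norm x)\<^sup>2) ` A)"
  have d_le: "d \<le> (norm y)\<^sup>2" if "y \<in> A" for y
    unfolding d_def using that by (intro cInf_lower bdd_belowI[of _ 0]) auto
  have "\<exists>x\<in>A. (norm x)\<^sup>2 < d + inverse (Suc n)" for n
    using cInf_lessD[of "(\<lambda>x. (norm x)\<^sup>2) ` A" "d + inverse (Suc n)"] \<open>a \<in> A\<close>
    unfolding d_def by auto
  then obtain X where XA: "\<And>n. X n \<in> A" and X_lt: "\<And>n. (norm (X n))\<^sup>2 < d + inverse (Suc n)"
    by (metis (no_types))
  \<comment> \<open>The midpoint of \<open>X m\<close> and \<open>X n\<close> lies in \<open>A\<close>, so the parallelogram law forces them together.\<close>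
  have X_close: "(norm (X m - X n))\<^sup>2 \<le> 2 * inverse (Suc m) + 2 * inverse (Suc n)" for m n
  proof -
    have "4 * d \<le> 4 * (norm ((1/2) *\<^sub>R (X m + X n)))\<^sup>2"
      using d_le[OF midpoint[OF XA XA]] by simp
    then have "4 * d \<le> (norm (X m + X n))\<^sup>2" by (simp add: power_mult_distrib power2_eq_square)
    then show ?thesis using parallelogram_law[of "X m" "X n"] X_lt[of m] X_lt[of n] by linarith
  qed
  have "Cauchy X"
  proof (rule CauchyI)
    fix e :: real
    assume "0 < e"
    then obtain M where M: "inverse (real (Suc M)) < e\<^sup>2 / 4"
      using reals_Archimedean[of "e\<^sup>2 / 4"] by auto
    have "norm (X m - X n) < e" if "M \<le> m" "M \<le> n" for m n
    proof -
      have "inverse (real (Suc m)) \<le> inverse (Suc M)" "inverse (real (Suc n)) \<le> inverse (Suc M)"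
        using that by (simp_all add: le_imp_inverse_le)
      then have "(norm (X m - X n))\<^sup>2 < e\<^sup>2" using X_close[of m n] M by linarith
      then show ?thesis using power2_less_imp_less \<open>0 < e\<close> by fastforce
    qed
    then show "\<exists>M. \<forall>m\<ge>M. \<forall>n\<ge>M. norm (X m - X n) < e" by blast
  qed
  then obtain x0 where lim: "X \<longlonglongrightarrow> x0" using Cauchy_convergent_iff convergent_def by blast
  have "x0 \<in> A" using \<open>closed A\<close> XA lim by (rule closed_sequentially)
  have "(norm x0)\<^sup>2 \<le> d"
  proof (rule LIMSEQ_le)
    show "(\<lambda>n. (norm (X n))\<^sup>2) \<longlonglongrightarrow> (norm x0)\<^sup>2" using lim by (intro tendsto_intros)
    show "(\<lambda>n. d + inverse (real (Suc n))) \<longlonglongrightarrow> d"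
      using tendsto_add[OF tendsto_const LIMSEQ_inverse_real_of_nat] by simp
    show "\<exists>N. \<forall>n\<ge>N. (norm (X n))\<^sup>2 \<le> d + inverse (real (Suc n))" using X_lt less_imp_le by blast
  qed
  then have "norm x0 \<le> norm y" if "y \<in> A" for y
    using power2_le_imp_le[OF order_trans[OF \<open>(norm x0)\<^sup>2 \<le> d\<close> d_le[OF that]]] by simp
  then show ?thesis using \<open>x0 \<in> A\<close> by blast
qed

lemma Re_cinner_eq_0_if_min_norm:
  fixes x w :: "'a::complex_inner"
  assumes "\<And>t. norm x \<le> norm (x - t *\<^sub>R w)"
  shows "Re (cinner x w) = 0"
proof -
  have "0 \<le> 0 - 2 * t * Re (cinner x w) + t\<^sup>2 * Re (cinner w w)" for t
  proof -
    have "(norm x)\<^sup>2 \<le> (norm (x - t *\<^sub>R w))\<^sup>2" using power_mono[OF assms norm_ge_zero] .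
    also have "\<dots> = (norm x)\<^sup>2 - 2 * t * Re (cinner x w) + t\<^sup>2 * (norm w)\<^sup>2"
      using Re_cinner_diff_scaleR[of x t w] by (simp add: Re_cinner_self)
    finally show ?thesis by (simp add: Re_cinner_self)
  qed
  then have "(Re (cinner x w))\<^sup>2 \<le> 0 * Re (cinner w w)" by (rule quadratic_nonneg_imp_sq_le)
  then show ?thesis by simp
qed

text \<open>The representing vector is a rescaled point of minimal norm on the hyperplane \<open>f x = 1\<close>,
  which is orthogonal to the kernel of \<open>f\<close>.\<close>
theorem riesz_representation:
  fixes f :: "'a::chilbert_space \<Rightarrow> complex"
  assumes add: "\<And>x y. f (x + y) = f x + f y"
    and scale: "\<And>c x. f (c *\<^sub>C x) = c * f x"
    and bounded: "\<And>x. cmod (f x) \<le> C * norm x"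
  shows "\<exists>z. \<forall>x. f x = cinner z x"
proof (cases "\<forall>x. f x = 0")
  case True
  then show ?thesis by (intro exI[of _ 0]) simp
next
  case False
  then obtain x1 where "f x1 \<noteq> 0" by auto
  have diff: "f (x - y) = f x - f y" for x y using add[of "x - y" y] by (simp add: eq_diff_eq)
  have scaleR: "f (r *\<^sub>R x) = of_real r * f x" for r x by (simp add: scaleR_scaleC scale)
  have lin: "bounded_linear f"
    using add bounded by (intro bounded_linear_intro[where K = C])
      (auto simp: scaleR scaleR_conv_of_real mult.commute)
  define A where "A = f -` {1}"
  have "\<exists>x0\<in>A. \<forall>y\<in>A. norm x0 \<le> norm y"
  proof (rule exists_min_norm)
    show "closed A" unfolding A_def using lin by (intro closed_vimage linear_continuous_on) auto
    show "(1 / f x1) *\<^sub>C x1 \<in> A" using \<open>f x1 \<noteq> 0\<close> by (simp add: A_def scale)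
    show "(1/2) *\<^sub>R (x + y) \<in> A" if "x \<in> A" "y \<in> A" for x y
      using that by (simp add: A_def scaleR add)
  qed
  then obtain x0 where "f x0 = 1" and min: "\<And>y. f y = 1 \<Longrightarrow> norm x0 \<le> norm y"
    by (auto simp: A_def)
  have Re_orth: "Re (cinner x0 w) = 0" if "f w = 0" for w
    using \<open>f x0 = 1\<close> that
    by (intro Re_cinner_eq_0_if_min_norm min) (simp add: diff scaleR)
  have orth: "cinner x0 w = 0" if "f w = 0" for w
    using Re_orth[of w] Re_orth[of "\<i> *\<^sub>C w"] that
    by (simp add: scale cinner_scaleC_right complex_eq_iff)
  have "x0 \<noteq> 0" using \<open>f x0 = 1\<close> lin linear_0 bounded_linear.linear by fastforce
  show ?thesis
  proof (intro exI[of _ "(1 / (norm x0)\<^sup>2) *\<^sub>R x0"] allI)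
    fix x
    have "f (x - f x *\<^sub>C x0) = 0" by (simp add: diff scale \<open>f x0 = 1\<close>)
    then have "cinner x0 (x - f x *\<^sub>C x0) = 0" by (rule orth)
    then have "cinner x0 x = f x * of_real ((norm x0)\<^sup>2)"
      by (simp add: cinner_diff_right cinner_scaleC_right cinner_self)
    then show "f x = cinner ((1 / (norm x0)\<^sup>2) *\<^sub>R x0) x"
      using \<open>x0 \<noteq> 0\<close> by (simp add: cinner_scaleR_left field_simps del: of_real_power)
  qed
qed

lemma adj_exists:
  fixes T :: "'a::chilbert_space \<Rightarrow> 'a"
  assumes lin: "clinear_op T" and bounded: "\<And>x. norm (T x) \<le> K * norm x"
  shows "\<exists>S. \<forall>x y. cinner (T x) y = cinner x (S y)"
proof -
  have "\<exists>z. \<forall>x. cinner y (T x) = cinner z x" for y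
  proof (rule riesz_representation[where C = "norm y * K"])
    show "cinner y (T (a + b)) = cinner y (T a) + cinner y (T b)" for a b
      using lin by (simp add: clinear_op_def cinner_add_right)
    show "cinner y (T (c *\<^sub>C a)) = c * cinner y (T a)" for c a
      using lin by (simp add: clinear_op_def cinner_scaleC_right)
    show "cmod (cinner y (T a)) \<le> norm y * K * norm a" for a
      using norm_cinner_le[of y "T a"] mult_left_mono[OF bounded[of a] norm_ge_zero[of y]]
      by (simp add: mult.assoc)
  qed
  then obtain S where "\<And>y x. cinner y (T x) = cinner (S y) x" by metis
  then show ?thesis by (metis cinner_commute)
qed

lemma cinner_adj_right:
  fixes T :: "'a::chilbert_space \<Rightarrow> 'a"
  assumes "contraction T"
  shows "cinner (T x) y = cinner x (adj T y)"
proof -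
  have "\<exists>S. \<forall>x y. cinner (T x) y = cinner x (S y)"
    using assms by (intro adj_exists[where K = 1]) (auto simp: contraction_def)
  from someI_ex[OF this] show ?thesis unfolding adj_def by blast
qed

lemma cinner_adj_left:
  fixes T :: "'a::chilbert_space \<Rightarrow> 'a"
  assumes "contraction T"
  shows "cinner (adj T y) x = cinner y (T x)"
  by (metis cinner_adj_right[OF assms] cinner_commute)

lemma adj_scaleC:
  fixes T :: "'a::chilbert_space \<Rightarrow> 'a"
  assumes "contraction T"
  shows "adj T (c *\<^sub>C y) = c *\<^sub>C adj T y"
  by (rule cinner_eq_imp_eq) (simp add: cinner_adj_right[OF assms, symmetric] cinner_scaleC_right)

lemma norm_adj_le:
  fixes T :: "'a::chilbert_space \<Rightarrow> 'a"
  assumes "contraction T"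
  shows "norm (adj T y) \<le> norm y"
proof -
  have "(norm (adj T y))\<^sup>2 = Re (cinner (T (adj T y)) y)"
    by (simp add: cinner_adj_right[OF assms] Re_cinner_self)
  also have "\<dots> \<le> norm (T (adj T y)) * norm y" by (rule Re_cinner_le_norm)
  also have "\<dots> \<le> norm (adj T y) * norm y"
    using assms by (intro mult_right_mono) (auto simp: contraction_def)
  finally have "norm (adj T y) * norm (adj T y) \<le> norm (adj T y) * norm y"
    by (simp add: power2_eq_square)
  then show ?thesis by (metis mult_le_cancel_left_pos norm_ge_zero order_le_less)
qed

text \<open>Taking adjoints in \<open>S R\<^sup>* = cnj q R\<^sup>* S\<close> gives \<open>R S\<^sup>* = q S\<^sup>* R\<close>; the two phases then cancel.\<close>
lemma adj_comp_self_commute: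
  fixes S R :: "'a::chilbert_space \<Rightarrow> 'a"
  assumes S: "contraction S" and R: "contraction R"
    and comm: "S \<circ> R = (\<lambda>x. q *\<^sub>C R (S x))"
    and adj_comm: "S \<circ> adj R = (\<lambda>x. cnj q *\<^sub>C adj R (S x))"
  shows "adj S (S (R y)) = R (adj S (S y))"
proof -
  have swap: "R (adj S z) = q *\<^sub>C adj S (R z)" for z
  proof (rule cinner_eq_imp_eq)
    fix w
    have "cinner w (R (adj S z)) = cinner (S (adj R w)) z"
      by (simp add: cinner_adj_left[OF R] cinner_adj_right[OF S])
    also have "\<dots> = q * cinner (S w) (R z)"
      using fun_cong[OF adj_comm, of w]
      by (simp add: cinner_scaleC_left cinner_adj_left[OF R])
    also have "\<dots> = cinner w (q *\<^sub>C adj S (R z))"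
      by (simp add: cinner_adj_right[OF S] cinner_scaleC_right)
    finally show "cinner w (R (adj S z)) = cinner w (q *\<^sub>C adj S (R z))" .
  qed
  show ?thesis
    using fun_cong[OF comm, of y] by (simp add: adj_scaleC[OF S] swap)
qed

section \<open>Ordered products of contractions\<close>

lemma clinear_op_diff_scaleR:
  assumes "clinear_op T"
  shows "T (y - t *\<^sub>R z) = T y - t *\<^sub>R T z"
proof -
  have "T (y + (- t) *\<^sub>R z) = T y + (- t) *\<^sub>R T z"
    using assms by (simp add: clinear_op_def scaleR_scaleC)
  then show ?thesis by simp
qed

lemma contraction_id: "contraction id"
  by (simp add: contraction_def clinear_op_def)

lemma contraction_comp: "contraction S \<Longrightarrow> contraction T \<Longrightarrow> contraction (S \<circ> T)"
  unfolding contraction_def clinear_op_def by (auto intro: order_trans)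

lemma contraction_Tpow:
  assumes "\<And>i. i \<in> v \<Longrightarrow> contraction (T i)"
  shows "contraction (Tpow T v)"
proof (cases "finite v")
  case True
  have "contraction (foldr (\<lambda>i f. T i \<circ> f) xs id)" if "set xs \<subseteq> v" for xs
    using that assms by (induction xs) (auto simp: contraction_id contraction_comp)
  then show ?thesis using True by (simp add: Tpow_def)
qed (simp add: Tpow_def contraction_id)

lemma Tpow_commute:
  assumes "\<And>i y. i \<in> v \<Longrightarrow> P (T i y) = T i (P y)"
  shows "P (Tpow T v y) = Tpow T v (P y)"
proof (cases "finite v")
  case True
  have "(\<forall>i\<in>set xs. \<forall>y. P (T i y) = T i (P y)) \<longrightarrow>
      (\<forall>y. P (foldr (\<lambda>i f. T i \<circ> f) xs id y) = foldr (\<lambda>i f. T i \<circ> f) xs id (P y))" for xs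
    by (induction xs) simp_all
  then show ?thesis using assms True by (simp add: Tpow_def)
qed (simp add: Tpow_def)

lemma Tpow_insert_less:
  assumes "finite v" and less: "\<And>j. j \<in> v \<Longrightarrow> n < j"
  shows "Tpow T (insert n v) = T n \<circ> Tpow T v"
proof -
  have "n \<notin> v" using less by blast
  then have "sorted_list_of_set (insert n v) = n # sorted_list_of_set v"
    using assms by (intro sorted_list_of_set_unique[THEN iffD1])
      (auto simp: strict_sorted_list_of_set)
  then show ?thesis by (simp add: Tpow_def)
qed

section \<open>Positivity of the operators S(u)\<close>

text \<open>Iterating Cauchy-Schwarz gives \<open>(B (P x) x / B x x) ^ 2^m \<le> B (P^(2^m) x) x / B x x\<close>,
  which stays bounded only if \<open>B (P x) x \<le> B x x\<close>.\<close>
lemma form_le_of_bounded_orbit: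
  fixes B :: "'a \<Rightarrow> 'a \<Rightarrow> real" and P :: "'a \<Rightarrow> 'a"
  assumes psd: "\<And>y. 0 \<le> B y y"
    and Cauchy_Schwarz: "\<And>y z. (B y z)\<^sup>2 \<le> B y y * B z z"
    and symmetric: "\<And>y z. B (P y) z = B y (P z)"
    and bounded: "\<And>j. B ((P ^^ j) x) x \<le> K"
  shows "B (P x) x \<le> B x x"
proof (rule ccontr)
  assume "\<not> B (P x) x \<le> B x x"
  then have less: "B x x < B (P x) x" by simp
  have "0 < B x x"
  proof (rule ccontr)
    assume "\<not> 0 < B x x"
    then have "(B (P x) x)\<^sup>2 \<le> 0" using Cauchy_Schwarz[of "P x" x] psd[of x] psd[of "P x"] by simp
    then show False using less psd[of x] by simp
  qed
  define r where "r = B (P x) x / B x x"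
  have symmetric_funpow: "B ((P ^^ j) y) z = B y ((P ^^ j) z)" for j y z
  proof (induction j arbitrary: z)
    case (Suc j)
    have "B ((P ^^ Suc j) y) z = B ((P ^^ j) y) (P z)" by (simp add: symmetric)
    also have "\<dots> = B y ((P ^^ Suc j) z)" by (simp add: Suc funpow_swap1)
    finally show ?case .
  qed simp
  have iterate: "r ^ (2 ^ m) \<le> B ((P ^^ (2 ^ m)) x) x / B x x" for m
  proof (induction m)
    case (Suc m)
    let ?y = "(P ^^ (2 ^ m)) x"
    have "B ?y ?y = B ((P ^^ (2 ^ Suc m)) x) x"
      by (simp add: symmetric_funpow[symmetric] funpow_add mult_2)
    then have CS: "(B ?y x)\<^sup>2 \<le> B ((P ^^ (2 ^ Suc m)) x) x * B x x"
      using Cauchy_Schwarz[of ?y x] by simp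
    have "r ^ (2 ^ Suc m) = (r ^ (2 ^ m))\<^sup>2" by (simp add: power_mult[symmetric] mult.commute)
    also have "\<dots> \<le> (B ?y x / B x x)\<^sup>2"
      using Suc \<open>0 < B x x\<close> less by (intro power_mono) (simp_all add: r_def)
    also have "\<dots> \<le> B ((P ^^ (2 ^ Suc m)) x) x / B x x"
      using CS \<open>0 < B x x\<close> by (simp add: power_divide power2_eq_square field_simps)
    finally show ?case .
  qed (simp add: r_def)
  have "1 < r" using less \<open>0 < B x x\<close> by (simp add: r_def)
  then obtain n where n: "K / B x x < r ^ n" using real_arch_pow by blast
  also have "r ^ n \<le> r ^ (2 ^ n)" using \<open>1 < r\<close> by (intro power_increasing) (simp_all add: less_imp_le)
  also have "\<dots> \<le> K / B x x"
    using iterate[of n] bounded[of "2 ^ n"] \<open>0 < B x x\<close> by (simp add: divide_right_mono order_trans)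
  finally show False by simp
qed

text \<open>The real part of \<open>\<langle>S(u) y, z\<rangle>\<close>.\<close>
definition brehmer_form :: "(nat \<Rightarrow> 'a::complex_inner \<Rightarrow> 'a) \<Rightarrow> nat set \<Rightarrow> 'a \<Rightarrow> 'a \<Rightarrow> real" where
  "brehmer_form T u y z = (\<Sum>v\<in>Pow u. (-1) ^ card v * Re (cinner (Tpow T v y) (Tpow T v z)))"

lemma cinner_Sop_self:
  fixes T :: "nat \<Rightarrow> 'a::chilbert_space \<Rightarrow> 'a"
  assumes "\<And>i. i \<in> u \<Longrightarrow> contraction (T i)"
  shows "cinner x (Sop T u x) = of_real (brehmer_form T u x x)"
proof -
  have "cinner x (Sop T u x) =
      (\<Sum>v\<in>Pow u. of_real ((-1) ^ card v * Re (cinner (Tpow T v x) (Tpow T v x))))"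
    unfolding Sop_def cinner_sum_right
  proof (rule sum.cong)
    fix v assume "v \<in> Pow u"
    then have "contraction (Tpow T v)" using assms by (intro contraction_Tpow) auto
    then show "cinner x (((-1::real) ^ card v) *\<^sub>R adj (Tpow T v) (Tpow T v x)) =
        of_real ((-1) ^ card v * Re (cinner (Tpow T v x) (Tpow T v x)))"
      by (simp add: cinner_scaleR_right cinner_adj_right[symmetric] cinner_self Re_cinner_self)
  qed simp
  then show ?thesis by (simp add: brehmer_form_def)
qed

lemma brehmer_form_diff_scaleR:
  assumes "\<And>i. i \<in> u \<Longrightarrow> contraction (T i)"
  shows "brehmer_form T u (y - t *\<^sub>R z) (y - t *\<^sub>R z)
    = brehmer_form T u y y - 2 * t * brehmer_form T u y z + t\<^sup>2 * brehmer_form T u z z"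
proof -
  let ?R = "\<lambda>v a b. Re (cinner (Tpow T v a) (Tpow T v b))"
  have "Tpow T v (y - t *\<^sub>R z) = Tpow T v y - t *\<^sub>R Tpow T v z" if "v \<in> Pow u" for v
    using that assms contraction_Tpow[of v T]
    by (intro clinear_op_diff_scaleR) (auto simp: contraction_def)
  then have "brehmer_form T u (y - t *\<^sub>R z) (y - t *\<^sub>R z)
      = (\<Sum>v\<in>Pow u. (-1) ^ card v * (?R v y y - 2 * t * ?R v y z + t\<^sup>2 * ?R v z z))"
    unfolding brehmer_form_def by (intro sum.cong) (simp_all add: Re_cinner_diff_scaleR)
  then show ?thesis
    by (simp add: brehmer_form_def algebra_simps sum.distrib sum_subtractf sum_distrib_left)
qed

lemma brehmer_form_le:
  assumes "\<And>i. i \<in> u \<Longrightarrow> contraction (T i)"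
  shows "brehmer_form T u y z \<le> card (Pow u) * (norm y * norm z)"
  unfolding brehmer_form_def
proof (rule sum_bounded_above)
  fix v assume "v \<in> Pow u"
  then have contr: "contraction (Tpow T v)" using assms by (intro contraction_Tpow) auto
  have "(-1) ^ card v * Re (cinner (Tpow T v y) (Tpow T v z)) \<le> cmod (cinner (Tpow T v y) (Tpow T v z))"
    using abs_Re_le_cmod[of "cinner (Tpow T v y) (Tpow T v z)"] by (cases "even (card v)") auto
  also have "\<dots> \<le> norm (Tpow T v y) * norm (Tpow T v z)" by (rule norm_cinner_le)
  also have "\<dots> \<le> norm y * norm z"
    using contr by (intro mult_mono) (auto simp: contraction_def)
  finally show "(-1) ^ card v * Re (cinner (Tpow T v y) (Tpow T v z)) \<le> norm y * norm z" .
qed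

lemma brehmer_form_insert_less:
  fixes T :: "nat \<Rightarrow> 'a::chilbert_space \<Rightarrow> 'a"
  assumes "finite u" and less: "\<forall>j\<in>u. n < j" and "contraction (T n)"
    and commute: "\<And>j y. j \<in> u \<Longrightarrow> adj (T n) (T n (T j y)) = T j (adj (T n) (T n y))"
  shows "brehmer_form T (insert n u) x x
    = brehmer_form T u x x - brehmer_form T u (adj (T n) (T n x)) x"
proof -
  let ?g = "\<lambda>v. (-1::real) ^ card v * Re (cinner (Tpow T v x) (Tpow T v x))"
  have "n \<notin> u" using less by blast
  have "brehmer_form T (insert n u) x x = sum ?g (Pow u) + sum ?g (insert n ` Pow u)"
    unfolding brehmer_form_def Pow_insert
    using \<open>finite u\<close> \<open>n \<notin> u\<close> by (intro sum.union_disjoint) auto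
  also have "sum ?g (insert n ` Pow u) = sum (?g \<circ> insert n) (Pow u)"
    using \<open>n \<notin> u\<close> by (intro sum.reindex) (auto simp: inj_on_def)
  also have "\<dots> = - brehmer_form T u (adj (T n) (T n x)) x"
    unfolding brehmer_form_def sum_negf[symmetric]
  proof (rule sum.cong)
    fix v assume v: "v \<in> Pow u"
    then have "finite v" "n \<notin> v" using \<open>finite u\<close> \<open>n \<notin> u\<close> by (auto intro: finite_subset)
    have "Tpow T (insert n v) = T n \<circ> Tpow T v"
      using \<open>finite v\<close> v less by (intro Tpow_insert_less) auto
    moreover have "adj (T n) (T n (Tpow T v x)) = Tpow T v (adj (T n) (T n x))"
      using v commute by (intro Tpow_commute) auto
    ultimately show "(?g \<circ> insert n) v = - ((-1) ^ card v
        * Re (cinner (Tpow T v (adj (T n) (T n x))) (Tpow T v x)))"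
      using \<open>finite v\<close> \<open>n \<notin> v\<close> by (simp add: cinner_adj_left[OF \<open>contraction (T n)\<close>, symmetric])
  qed simp
  finally show ?thesis by (simp add: brehmer_form_def)
qed

text \<open>\<open>T\<^sub>n\<^sup>* T\<^sub>n\<close> commutes with the remaining \<open>T\<^sub>j\<close>, so it is symmetric for the form of \<open>S(u)\<close>,
  nonnegative by induction; being a contraction, its orbits are bounded.\<close>
theorem brehmer_form_nonneg:
  fixes T :: "nat \<Rightarrow> 'a::chilbert_space \<Rightarrow> 'a"
  assumes "finite u" and "\<And>i. i \<in> u \<Longrightarrow> contraction (T i)"
    and "\<And>i j y. i \<in> u \<Longrightarrow> j \<in> u \<Longrightarrow> i < j \<Longrightarrow>
      adj (T i) (T i (T j y)) = T j (adj (T i) (T i y))"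
  shows "0 \<le> brehmer_form T u x x"
  using assms
proof (induction u arbitrary: x rule: finite_linorder_min_induct)
  case empty
  then show ?case by (simp add: brehmer_form_def Tpow_def Re_cinner_self)
next
  case (insert n u)
  define P where "P y = adj (T n) (T n y)" for y
  have contr: "\<And>i. i \<in> u \<Longrightarrow> contraction (T i)" and "contraction (T n)"
    using insert.prems(1) by auto
  have P_commute: "P (T j y) = T j (P y)" if "j \<in> u" for j y
    using insert.prems(2) insert.hyps(2) that by (simp add: P_def)
  have nonneg: "0 \<le> brehmer_form T u y y" for y
    using insert.IH insert.prems by simp
  have P_Tpow: "P (Tpow T v y) = Tpow T v (P y)" if "v \<subseteq> u" for v y
    using that by (intro Tpow_commute P_commute) auto
  have Re_P_left: "Re (cinner (P a) b) = Re (cinner (T n a) (T n b))" for a b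
    by (simp add: P_def cinner_adj_left[OF \<open>contraction (T n)\<close>])
  have Re_P_right: "Re (cinner a (P b)) = Re (cinner (T n a) (T n b))" for a b
    by (simp add: P_def cinner_adj_right[OF \<open>contraction (T n)\<close>])
  have norm_P: "norm (P y) \<le> norm y" for y
    using norm_adj_le[OF \<open>contraction (T n)\<close>, of "T n y"] \<open>contraction (T n)\<close>
    by (auto simp: P_def contraction_def intro: order_trans)
  have "brehmer_form T u (P x) x \<le> brehmer_form T u x x"
  proof (rule form_le_of_bounded_orbit[where B = "brehmer_form T u" and P = P
        and K = "card (Pow u) * (norm x * norm x)"])
    show "0 \<le> brehmer_form T u y y" for y by (rule nonneg)
    show "(brehmer_form T u y z)\<^sup>2 \<le> brehmer_form T u y y * brehmer_form T u z z" for y z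
      by (rule psd_form_Cauchy_Schwarz[OF nonneg brehmer_form_diff_scaleR[OF contr]])
    show "brehmer_form T u (P y) z = brehmer_form T u y (P z)" for y z
      unfolding brehmer_form_def by (intro sum.cong) (auto simp: P_Tpow[symmetric] Re_P_left Re_P_right)
    show "brehmer_form T u ((P ^^ j) x) x \<le> card (Pow u) * (norm x * norm x)" for j
    proof -
      have "norm ((P ^^ j) x) \<le> norm x" by (induction j) (auto intro: order_trans[OF norm_P])
      then show ?thesis using brehmer_form_le[OF contr, where y = "(P ^^ j) x" and z = x]
        by (meson mult_left_mono mult_right_mono norm_ge_zero of_nat_0_le_iff order_trans)
    qed
  qed
  then show ?case
    using brehmer_form_insert_less[where T = T, OF insert.hyps(1,2) \<open>contraction (T n)\<close>] P_commute
    by (simp add: P_def)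
qed

theorem proposition3p3:
  fixes T :: "nat \<Rightarrow> 'a::chilbert_space \<Rightarrow> 'a"
    and q :: "nat \<Rightarrow> nat \<Rightarrow> complex"
    and k :: nat
  assumes contr: "\<And>i. i \<in> {1..k} \<Longrightarrow> contraction (T i)"
    and q_circle: "\<And>i j. 1 \<le> i \<Longrightarrow> i < j \<Longrightarrow> j \<le> k \<Longrightarrow> cmod (q i j) = 1"
    and comm: "\<And>i j. 1 \<le> i \<Longrightarrow> i < j \<Longrightarrow> j \<le> k \<Longrightarrow>
                 T i \<circ> T j = (\<lambda>x. q i j *\<^sub>C T j (T i x))"
    and dcomm: "\<And>i j. 1 \<le> i \<Longrightarrow> i < j \<Longrightarrow> j \<le> k \<Longrightarrow>
                 T i \<circ> adj (T j) = (\<lambda>x. cnj (q i j) *\<^sub>C adj (T j) (T i x))"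
  shows "\<forall>u. u \<subseteq> {1..k} \<longrightarrow> positive_op (Sop T u)"
proof (intro allI impI)
  fix u :: "nat set"
  assume u: "u \<subseteq> {1..k}"
  then have "finite u" by (rule finite_subset) simp
  have contr_u: "\<And>i. i \<in> u \<Longrightarrow> contraction (T i)" using contr u by blast
  have "adj (T i) (T i (T j y)) = T j (adj (T i) (T i y))" if "i \<in> u" "j \<in> u" "i < j" for i j y
    using that u by (intro adj_comp_self_commute[OF contr_u contr_u comm dcomm]) auto
  with \<open>finite u\<close> contr_u have "0 \<le> brehmer_form T u x x" for x
    by (rule brehmer_form_nonneg)
  then show "positive_op (Sop T u)"
    by (simp add: positive_op_def cinner_Sop_self[OF contr_u])
qed

end
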